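(* For $|q|<1$, let $$S(q):=\sum_{n=1}^{\infty} \frac{q^n (q^{n+1};q)_n (q^{2n+2};q^2)_{\infty}}{(1+q^n)(-q^{n+1};q)_n (-q^{2n+2};q^2)_{\infty}}.$$ Then $$S(q)=-\sum_{n=1}^{\infty} (-1)^n q^{2n^2}+\sum_{k=1}^{\infty} \frac{q^{k} (q;q^2)_{k}}{(-q;q^2)_k (1+q^{2k})}.$$
   Context: $(a;q)_n=\prod_{j=0}^{n-1}(1-aq^j)$, $(a;q)_\infty=\prod_{j\ge0}(1-aq^j)$. *)

theory Defs
  imports "HOL-Analysis.Analysis"
begin

definition qpoch :: "complex \<Rightarrow> complex \<Rightarrow> nat \<Rightarrow> complex" where
  "qpoch a q n = (\<Prod>j<n. 1 - a * q ^ j)"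

definition qpoch_inf :: "complex \<Rightarrow> complex \<Rightarrow> complex" where
  "qpoch_inf a q = (\<Prod>j. 1 - a * q ^ j)"

end

theory Submission
  imports Defs
begin

(* Each summand equals R/2 * q^m (q;q^2)_m (-1;q)_m / ((-q;q^2)_m (q;q)_m) with m = n + 1
   and R = (q^2;q^2)_inf / (-q^2;q^2)_inf.  Expanding (q;q^2)_m / (-q;q^2)_m by the
   q-binomial theorem in base q^2 gives an absolutely convergent double series; summed in
   the other order its inner sums are q-binomial series in base q, and one obtains
     sum_{m>=0} q^m (q;q^2)_m (-1;q)_m / ((-q;q^2)_m (q;q)_m)
       = 2/R * sum_{j>=0} q^j (q;q^2)_j / ((-q;q^2)_j (1 + q^(2j))).
   Gauss' identity R = 1 + 2 sum_{n>=1} (-1)^n q^(2n^2), obtained by letting n -> inf in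
   Cauchy's finite q-binomial theorem, turns the terms m = 0 and j = 0 into the theta series. *)

section \<open>q-Pochhammer symbols\<close>

lemma qpoch_0 [simp]: "qpoch a b 0 = 1"
  by (simp add: qpoch_def)

lemma qpoch_Suc: "qpoch a b (Suc n) = qpoch a b n * (1 - a * b ^ n)"
  by (simp add: qpoch_def)

lemma qpoch_add: "qpoch a b (m + n) = qpoch a b m * qpoch (a * b ^ m) b n"
  by (induction n) (simp_all add: qpoch_Suc power_add mult_ac)

lemma qpoch_even_odd: "qpoch a b (2 * n) = qpoch a (b\<^sup>2) n * qpoch (a * b) (b\<^sup>2) n"
proof (induction n)
  case (Suc n)
  have "qpoch a b (2 * Suc n) = qpoch a b (2 * n) * (1 - a * b ^ (2 * n)) * (1 - a * b ^ Suc (2 * n))"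
    by (simp add: qpoch_Suc)
  also have "\<dots> = qpoch a (b\<^sup>2) (Suc n) * qpoch (a * b) (b\<^sup>2) (Suc n)"
    unfolding qpoch_Suc Suc.IH power_mult[symmetric] by (simp add: mult_ac)
  finally show ?case .
qed simp

lemma qpoch_plus_minus: "qpoch (- a) b n * qpoch a b n = qpoch (a\<^sup>2) (b\<^sup>2) n"
  by (induction n) (simp_all add: qpoch_Suc algebra_simps power2_eq_square power_mult_distrib)

lemma qpoch_minus_one: "qpoch (- 1) b n * (1 + b ^ n) = 2 * qpoch (- b) b n"
  using qpoch_add[of "- 1" b 1 n] qpoch_add[of "- 1" b n 1] by (simp add: qpoch_def)

lemma one_minus_mult_power_nonzero:
  fixes a b :: complex
  assumes "norm a \<le> 1" "a \<noteq> 1" "norm b < 1"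
  shows "1 - a * b ^ j \<noteq> 0"
proof (cases "j = 0")
  case False
  have "norm (a * b ^ j) \<le> norm b ^ j"
    using assms by (simp add: norm_mult norm_power mult_left_le_one_le)
  also have "\<dots> < 1"
    using assms False by (simp add: power_less_one_iff)
  finally show ?thesis by auto
qed (use assms in simp)

lemma qpoch_nonzero:
  fixes a b :: complex
  assumes "norm a < 1" "norm b < 1"
  shows "qpoch a b n \<noteq> 0"
proof -
  have "a \<noteq> 1"
    using assms by auto
  then show ?thesis
    using one_minus_mult_power_nonzero[of a b] assms by (simp add: qpoch_def)
qed

lemma qpoch_convergent_prod:
  fixes a b :: complex
  assumes "norm b < 1"
  shows "convergent_prod (\<lambda>j. 1 - a * b ^ j)"
proof -
  have "summable (\<lambda>j. norm a * norm b ^ j)"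
    using assms by (intro summable_mult summable_geometric) simp
  then show ?thesis
    by (intro abs_convergent_prod_imp_convergent_prod summable_imp_abs_convergent_prod)
       (simp add: norm_mult norm_power)
qed

lemma qpoch_tendsto_qpoch_inf:
  fixes a b :: complex
  assumes "norm b < 1"
  shows "(\<lambda>n. qpoch a b n) \<longlonglongrightarrow> qpoch_inf a b"
proof -
  have "(\<lambda>n. qpoch a b (Suc n)) \<longlonglongrightarrow> qpoch_inf a b"
    using convergent_prod_LIMSEQ[OF qpoch_convergent_prod[OF assms]]
    by (simp add: qpoch_def qpoch_inf_def lessThan_Suc_atMost)
  then show ?thesis by (rule LIMSEQ_imp_Suc)
qed

lemma qpoch_inf_nonzero:
  fixes a b :: complex
  assumes "norm a < 1" "norm b < 1"
  shows "qpoch_inf a b \<noteq> 0"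
proof -
  have "a \<noteq> 1"
    using assms by auto
  then show ?thesis
    unfolding qpoch_inf_def
    by (intro prodinf_nonzero qpoch_convergent_prod one_minus_mult_power_nonzero) (use assms in auto)
qed

lemma qpoch_inf_split:
  fixes a b :: complex
  assumes "norm b < 1"
  shows "qpoch_inf a b = qpoch a b n * qpoch_inf (a * b ^ n) b"
proof -
  have "(\<lambda>m. qpoch a b (m + n)) \<longlonglongrightarrow> qpoch_inf a b"
    using LIMSEQ_ignore_initial_segment[OF qpoch_tendsto_qpoch_inf[OF assms]] .
  moreover have "(\<lambda>m. qpoch a b (m + n)) \<longlonglongrightarrow> qpoch a b n * qpoch_inf (a * b ^ n) b"
    unfolding add.commute[of _ n] qpoch_add
    by (intro tendsto_mult tendsto_const qpoch_tendsto_qpoch_inf assms)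
  ultimately show ?thesis by (rule LIMSEQ_unique)
qed

lemma norm_power2_less_one: "norm (b::complex) < 1 \<Longrightarrow> norm (b\<^sup>2) < 1"
  by (simp add: norm_power power_less_one_iff)

lemma norm_power_mult_less_one:
  fixes b y :: complex
  assumes "norm b < 1" "norm y < 1"
  shows "norm (b ^ N * y) < 1"
proof -
  have "norm (b ^ N * y) \<le> norm y"
    using assms by (simp add: norm_mult norm_power mult_left_le_one_le power_le_one)
  then show ?thesis using assms by simp
qed

lemma qpoch_inf_even_odd:
  fixes a b :: complex
  assumes "norm b < 1"
  shows "qpoch_inf a b = qpoch_inf a (b\<^sup>2) * qpoch_inf (a * b) (b\<^sup>2)"
proof -
  have "(\<lambda>n. qpoch a b (2 * n)) \<longlonglongrightarrow> qpoch_inf a b"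
    by (rule LIMSEQ_subseq_LIMSEQ[OF qpoch_tendsto_qpoch_inf[OF assms], unfolded o_def])
       (simp add: strict_mono_def)
  moreover have "(\<lambda>n. qpoch a b (2 * n)) \<longlonglongrightarrow> qpoch_inf a (b\<^sup>2) * qpoch_inf (a * b) (b\<^sup>2)"
    unfolding qpoch_even_odd
    by (intro tendsto_mult qpoch_tendsto_qpoch_inf norm_power2_less_one assms)
  ultimately show ?thesis by (rule LIMSEQ_unique)
qed

lemma qpoch_inf_plus_minus:
  fixes a b :: complex
  assumes "norm b < 1"
  shows "qpoch_inf (- a) b * qpoch_inf a b = qpoch_inf (a\<^sup>2) (b\<^sup>2)"
proof -
  have "(\<lambda>n. qpoch (- a) b n * qpoch a b n) \<longlonglongrightarrow> qpoch_inf (- a) b * qpoch_inf a b"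
    by (intro tendsto_mult qpoch_tendsto_qpoch_inf assms)
  moreover have "(\<lambda>n. qpoch (- a) b n * qpoch a b n) \<longlonglongrightarrow> qpoch_inf (a\<^sup>2) (b\<^sup>2)"
    unfolding qpoch_plus_minus by (intro qpoch_tendsto_qpoch_inf norm_power2_less_one assms)
  ultimately show ?thesis by (rule LIMSEQ_unique)
qed

lemma Bseq_qpoch:
  fixes a b :: complex
  assumes "norm b < 1"
  shows "Bseq (qpoch a b)"
  using convergentI[OF qpoch_tendsto_qpoch_inf[OF assms]] by (rule convergent_imp_Bseq)

lemma Bseq_inverse_qpoch:
  fixes a b :: complex
  assumes "norm a < 1" "norm b < 1"
  shows "Bseq (\<lambda>n. inverse (qpoch a b n))"
proof -
  have "(\<lambda>n. qpoch a b n) \<longlonglongrightarrow> qpoch_inf a b"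
    using assms(2) by (rule qpoch_tendsto_qpoch_inf)
  then show ?thesis
    by (rule Bfun_inverse) (rule qpoch_inf_nonzero[OF assms])
qed

section \<open>The q-binomial theorem\<close>

definition qbinomial_coeff :: "complex \<Rightarrow> complex \<Rightarrow> nat \<Rightarrow> complex" where
  "qbinomial_coeff a b n = qpoch a b n / qpoch b b n"

definition qbinomial_series :: "complex \<Rightarrow> complex \<Rightarrow> complex \<Rightarrow> complex" where
  "qbinomial_series a b y = (\<Sum>n. qbinomial_coeff a b n * y ^ n)"

lemma qbinomial_coeff_0 [simp]: "qbinomial_coeff a b 0 = 1"
  by (simp add: qbinomial_coeff_def)

lemma qbinomial_coeff_Suc:
  assumes "norm b < 1"
  shows "qbinomial_coeff a b (Suc n) * (1 - b ^ Suc n) = qbinomial_coeff a b n * (1 - a * b ^ n)"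
proof -
  have "b \<noteq> 1"
    using assms by auto
  then have "qpoch b b n \<noteq> 0" "1 - b * b ^ n \<noteq> 0"
    using qpoch_nonzero[of b b n] one_minus_mult_power_nonzero[of b b n] assms by simp_all
  then show ?thesis
    unfolding qbinomial_coeff_def qpoch_Suc power_Suc by (simp add: field_simps)
qed

lemma Bseq_qbinomial_coeff:
  assumes "norm b < 1"
  shows "Bseq (qbinomial_coeff a b)"
  unfolding qbinomial_coeff_def divide_inverse
  using assms by (intro Bseq_mult Bseq_qpoch Bseq_inverse_qpoch)

lemma summable_Bseq_mult_power:
  fixes c :: "nat \<Rightarrow> complex"
  assumes "Bseq c" "norm y < 1"
  shows "summable (\<lambda>n. c n * y ^ n)"
proof -
  obtain K where "\<And>n. norm (c n) \<le> K"
    using assms(1) unfolding Bseq_def by auto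
  show ?thesis
  proof (rule summable_comparison_test')
    show "summable (\<lambda>n. K * norm y ^ n)"
      using assms(2) by (intro summable_mult summable_geometric) simp
    show "norm (c n * y ^ n) \<le> K * norm y ^ n" for n
      using \<open>norm (c n) \<le> K\<close> by (simp add: norm_mult norm_power mult_right_mono)
  qed
qed

lemma qbinomial_series_sums:
  assumes "norm b < 1" "norm y < 1"
  shows "(\<lambda>n. qbinomial_coeff a b n * y ^ n) sums qbinomial_series a b y"
  unfolding qbinomial_series_def
  by (intro summable_sums summable_Bseq_mult_power Bseq_qbinomial_coeff assms)

text \<open>With \<open>u\<^sub>n = c\<^sub>n (1 - b\<^sup>n) y\<^sup>n\<close>, the recurrence of the coefficients \<open>c\<^sub>n\<close> makes the
  two sides differ by \<open>\<Sum> u\<^sub>n - \<Sum> u\<^sub>n\<^sub>+\<^sub>1 = u\<^sub>0 = 0\<close>.\<close>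
lemma qbinomial_series_functional_equation:
  assumes b: "norm b < 1" and y: "norm y < 1"
  shows "(1 - y) * qbinomial_series a b y = (1 - a * y) * qbinomial_series a b (b * y)"
proof -
  define c where "c = qbinomial_coeff a b"
  define G where "G = qbinomial_series a b"
  define u where "u = (\<lambda>n. c n * (1 - b ^ n) * y ^ n)"
  have Gy: "(\<lambda>n. c n * y ^ n) sums G y" and Gby: "(\<lambda>n. c n * (b * y) ^ n) sums G (b * y)"
    unfolding c_def G_def
    using qbinomial_series_sums[OF b y] qbinomial_series_sums[OF b norm_power_mult_less_one[OF b y, of 1]]
    by simp_all
  have "(\<lambda>n. c n * y ^ n - c n * (b * y) ^ n) sums (G y - G (b * y))"
    by (rule sums_diff[OF Gy Gby])
  then have "u sums (G y - G (b * y))"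
    by (simp add: u_def power_mult_distrib algebra_simps)
  moreover have "u (Suc n) = y * (c n * y ^ n) - a * y * (c n * (b * y) ^ n)" for n
  proof -
    have "u (Suc n) = c (Suc n) * (1 - b ^ Suc n) * y ^ Suc n"
      by (simp add: u_def)
    also have "\<dots> = c n * (1 - a * b ^ n) * y ^ Suc n"
      unfolding c_def qbinomial_coeff_Suc[OF b] ..
    finally show ?thesis
      by (simp add: power_mult_distrib algebra_simps)
  qed
  then have "(\<lambda>n. u (Suc n)) sums (y * G y - a * y * G (b * y))"
    by (simp only: sums_diff sums_mult Gy Gby)
  then have "u sums (y * G y - a * y * G (b * y) + u 0)"
    by (simp only: sums_Suc_iff)
  ultimately have "G y - G (b * y) = y * G y - a * y * G (b * y) + u 0"
    by (rule sums_unique2)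
  then show ?thesis
    unfolding G_def u_def by (simp add: algebra_simps)
qed

lemma qbinomial_series_iterate:
  assumes "norm b < 1" "norm y < 1"
  shows "qpoch y b N * qbinomial_series a b y = qpoch (a * y) b N * qbinomial_series a b (b ^ N * y)"
proof (induction N)
  case (Suc N)
  have "qpoch y b (Suc N) * qbinomial_series a b y
      = qpoch (a * y) b N * ((1 - b ^ N * y) * qbinomial_series a b (b ^ N * y))"
    using Suc.IH by (simp add: qpoch_Suc mult_ac)
  also have "\<dots> = qpoch (a * y) b N * ((1 - a * (b ^ N * y)) * qbinomial_series a b (b ^ Suc N * y))"
    using qbinomial_series_functional_equation[OF assms(1) norm_power_mult_less_one[OF assms]]
    by (simp add: mult.assoc)
  finally show ?case
    by (simp add: qpoch_Suc mult_ac)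
qed simp

lemma qbinomial_series_tendsto_one:
  assumes "norm b < 1" "norm y < 1"
  shows "(\<lambda>N. qbinomial_series a b (b ^ N * y)) \<longlonglongrightarrow> 1"
proof -
  have "isCont (qbinomial_series a b) 0"
    unfolding qbinomial_series_def[abs_def]
    by (rule isCont_powser[where K = "1/2"])
       (use summable_Bseq_mult_power[OF Bseq_qbinomial_coeff[OF assms(1)], of "1/2"] in auto)
  moreover have "(\<lambda>N. b ^ N * y) \<longlonglongrightarrow> 0"
    using assms by (intro tendsto_mult_left_zero LIMSEQ_power_zero)
  ultimately have "(\<lambda>N. qbinomial_series a b (b ^ N * y)) \<longlonglongrightarrow> qbinomial_series a b 0"
    by (rule isCont_tendsto_compose)
  then show ?thesis
    by (simp add: qbinomial_series_def)
qed

theorem qbinomial_theorem: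
  assumes "norm b < 1" "norm y < 1"
  shows "(\<lambda>n. qbinomial_coeff a b n * y ^ n) sums (qpoch_inf (a * y) b / qpoch_inf y b)"
proof -
  have "(\<lambda>N. qpoch y b N * qbinomial_series a b y) \<longlonglongrightarrow> qpoch_inf y b * qbinomial_series a b y"
    by (intro tendsto_mult qpoch_tendsto_qpoch_inf assms tendsto_const)
  moreover have "(\<lambda>N. qpoch y b N * qbinomial_series a b y) \<longlonglongrightarrow> qpoch_inf (a * y) b * 1"
    unfolding qbinomial_series_iterate[OF assms]
    by (intro tendsto_mult qpoch_tendsto_qpoch_inf qbinomial_series_tendsto_one assms)
  ultimately have "qpoch_inf y b * qbinomial_series a b y = qpoch_inf (a * y) b"
    by (simp add: LIMSEQ_unique)
  moreover have "qpoch_inf y b \<noteq> 0"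
    using assms(2,1) by (rule qpoch_inf_nonzero)
  ultimately have "qbinomial_series a b y = qpoch_inf (a * y) b / qpoch_inf y b"
    by (simp add: field_simps)
  then show ?thesis
    using qbinomial_series_sums[OF assms, of a] by simp
qed

section \<open>Double series and Tannery's theorem\<close>

lemma summable_suminf_product_bounded:
  fixes f :: "nat \<Rightarrow> nat \<Rightarrow> 'a::banach"
  assumes bound: "\<And>m j. norm (f m j) \<le> a m * b j"
    and "summable a" "summable b"
  shows "summable (\<lambda>m. \<Sum>j. f m j)"
proof (rule summable_comparison_test')
  show "summable (\<lambda>m. a m * suminf b)"
    using \<open>summable a\<close> by (rule summable_mult2)
  show "norm (\<Sum>j. f m j) \<le> a m * suminf b" for m
  proof -
    have "summable (\<lambda>j. norm (f m j))"
      by (rule summable_comparison_test'[OF summable_mult[OF \<open>summable b\<close>, of "a m"]]) (simp add: bound)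
    then have "norm (\<Sum>j. f m j) \<le> (\<Sum>j. norm (f m j))"
      by (rule summable_norm)
    also have "\<dots> \<le> (\<Sum>j. a m * b j)"
      using bound \<open>summable (\<lambda>j. norm (f m j))\<close> \<open>summable b\<close> by (intro suminf_le summable_mult) auto
    finally show ?thesis
      using \<open>summable b\<close> by (simp add: suminf_mult)
  qed
qed

lemma suminf_swap_product_bounded:
  fixes f :: "nat \<Rightarrow> nat \<Rightarrow> 'a::{real_normed_algebra,banach}"
  assumes bound: "\<And>m j. norm (f m j) \<le> a m * b j"
    and a: "summable a" "\<And>m. 0 \<le> a m" and b: "summable b" "\<And>j. 0 \<le> b j"
  shows "summable (\<lambda>m. \<Sum>j. f m j)" "summable (\<lambda>j. \<Sum>m. f m j)"
    and "(\<Sum>m. \<Sum>j. f m j) = (\<Sum>j. \<Sum>m. f m j)"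
proof -
  show sum_rows: "summable (\<lambda>m. \<Sum>j. f m j)"
    using bound a(1) b(1) by (rule summable_suminf_product_bounded)
  show "summable (\<lambda>j. \<Sum>m. f m j)"
    using bound b(1) a(1) by (intro summable_suminf_product_bounded[of "\<lambda>j m. f m j" b a]) (simp_all add: mult.commute)
  have rows: "summable (f m)" for m
    by (rule summable_comparison_test'[OF summable_mult[OF b(1), of "a m"]]) (rule bound)
  have cols: "summable (\<lambda>m. f m j)" for j
    by (rule summable_comparison_test'[OF summable_mult2[OF a(1), of "b j"]]) (rule bound)
  have "(\<lambda>n. \<Sum>j. \<Sum>m<n. f m j) \<longlonglongrightarrow> (\<Sum>j. \<Sum>m. f m j)"
  proof (rule tannerys_theorem[where M = "\<lambda>j. suminf a * b j", THEN conjunct2, THEN conjunct2])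
    show "(\<lambda>n. \<Sum>m<n. f m j) \<longlonglongrightarrow> (\<Sum>m. f m j)" for j
      by (rule summable_LIMSEQ[OF cols])
    show "\<forall>\<^sub>F (j, n) in at_top \<times>\<^sub>F sequentially. norm (\<Sum>m<n. f m j) \<le> suminf a * b j"
    proof (intro always_eventually allI, clarify)
      fix j n
      have "norm (\<Sum>m<n. f m j) \<le> (\<Sum>m<n. a m) * b j"
        unfolding sum_distrib_right by (rule order.trans[OF norm_sum sum_mono]) (rule bound)
      also have "\<dots> \<le> suminf a * b j"
        using a b by (intro mult_right_mono sum_le_suminf) auto
      finally show "norm (\<Sum>m<n. f m j) \<le> suminf a * b j" .
    qed
    show "summable (\<lambda>j. suminf a * b j)"
      using b(1) by (rule summable_mult)
  qed simp
  moreover have "(\<lambda>n. \<Sum>j. \<Sum>m<n. f m j) = (\<lambda>n. \<Sum>m<n. \<Sum>j. f m j)"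
    by (intro ext suminf_sum rows)
  ultimately show "(\<Sum>m. \<Sum>j. f m j) = (\<Sum>j. \<Sum>m. f m j)"
    using summable_LIMSEQ[OF sum_rows] by (metis LIMSEQ_unique)
qed

lemma tendsto_sum_lessThan_mult_bounded:
  fixes th :: "nat \<Rightarrow> 'a::{real_normed_algebra,banach}"
  assumes th: "summable (\<lambda>k. norm (th k))"
    and bounded: "\<And>n k. norm (w n k) \<le> M" and lim: "\<And>k. (\<lambda>n. w n k) \<longlonglongrightarrow> l"
  shows "(\<lambda>n. \<Sum>k<n. th k * w n k) \<longlonglongrightarrow> suminf th * l"
proof -
  define a where "a k n = (if k < n then th k * w n k else 0)" for k n
  have "(\<lambda>n. \<Sum>k. a k n) \<longlonglongrightarrow> (\<Sum>k. th k * l)"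
  proof (rule tannerys_theorem[where M = "\<lambda>k. norm (th k) * M", THEN conjunct2, THEN conjunct2])
    show "(\<lambda>n. a k n) \<longlonglongrightarrow> th k * l" for k
    proof (rule Lim_transform_eventually)
      show "(\<lambda>n. th k * w n k) \<longlonglongrightarrow> th k * l"
        by (intro tendsto_mult_left lim)
      show "\<forall>\<^sub>F n in sequentially. th k * w n k = a k n"
        by (rule eventually_sequentiallyI[of "Suc k"]) (simp add: a_def)
    qed
    have "0 \<le> M"
      using bounded[of 0 0] norm_ge_zero order.trans by blast
    have "norm (a k n) \<le> norm (th k) * M" for k n
      using norm_mult_ineq[of "th k" "w n k"] mult_left_mono[OF bounded[of n k] norm_ge_zero[of "th k"]] \<open>0 \<le> M\<close>
      by (auto simp: a_def)
    then show "\<forall>\<^sub>F (k, n) in at_top \<times>\<^sub>F sequentially. norm (a k n) \<le> norm (th k) * M"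
      by (intro always_eventually) auto
    show "summable (\<lambda>k. norm (th k) * M)"
      using th by (rule summable_mult2)
  qed simp
  moreover have "(\<Sum>k. a k n) = (\<Sum>k<n. th k * w n k)" for n
    by (subst suminf_finite[of "{..<n}"]) (auto simp: a_def)
  ultimately show ?thesis
    using suminf_mult2[OF summable_norm_cancel[OF th], of l] by simp
qed

section \<open>A double series transformation\<close>

lemma qpoch_inf_ratio_shift:
  fixes a b :: complex
  assumes "norm a < 1" "norm b < 1"
  shows "qpoch_inf (- (a * b ^ n)) b / qpoch_inf (a * b ^ n) b
    = qpoch_inf (- a) b / qpoch_inf a b * (qpoch a b n / qpoch (- a) b n)"
proof -
  have "norm (a * b ^ n) < 1"
    using norm_power_mult_less_one[OF assms(2,1)] by (simp add: mult.commute)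
  then have "qpoch_inf (a * b ^ n) b \<noteq> 0" "qpoch_inf (- (a * b ^ n)) b \<noteq> 0"
    "qpoch a b n \<noteq> 0" "qpoch (- a) b n \<noteq> 0"
    using assms by (simp_all add: qpoch_inf_nonzero qpoch_nonzero)
  then show ?thesis
    using qpoch_inf_split[OF assms(2), of a n] qpoch_inf_split[OF assms(2), of "- a" n]
    by (simp add: field_simps)
qed

definition odd_ratio :: "complex \<Rightarrow> nat \<Rightarrow> complex" where
  "odd_ratio q n = qpoch q (q\<^sup>2) n / qpoch (- q) (q\<^sup>2) n"

lemma odd_ratio_0 [simp]: "odd_ratio q 0 = 1"
  by (simp add: odd_ratio_def)

lemma qbinomial_coeff_even_base:
  fixes q :: complex
  assumes q: "norm q < 1"
  shows "qbinomial_coeff (- 1) (q\<^sup>2) j * (qpoch q q (2 * j) / qpoch (- q) q (2 * j))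
    = 2 * odd_ratio q j / (1 + q ^ (2 * j))"
proof -
  have q2: "norm (q\<^sup>2) < 1"
    using q by (rule norm_power2_less_one)
  define u where "u = 1 + q ^ (2 * j)"
  have "u \<noteq> 0"
    using one_minus_mult_power_nonzero[of "- 1" "q\<^sup>2" j] q2 by (simp add: u_def power_mult)
  have "qpoch (- 1) (q\<^sup>2) j * u = 2 * qpoch (- (q\<^sup>2)) (q\<^sup>2) j"
    using qpoch_minus_one[of "q\<^sup>2" j] by (simp add: u_def power_mult)
  moreover have "qpoch (q\<^sup>2) (q\<^sup>2) j \<noteq> 0" "qpoch (- q) (q\<^sup>2) j \<noteq> 0" "qpoch (- (q\<^sup>2)) (q\<^sup>2) j \<noteq> 0"
    using q q2 by (simp_all add: qpoch_nonzero)
  ultimately have minus_q2: "qpoch (- (q\<^sup>2)) (q\<^sup>2) j = qpoch (- 1) (q\<^sup>2) j * u / 2"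
    and "qpoch (- 1) (q\<^sup>2) j \<noteq> 0"
    by auto
  have even_q: "qpoch q q (2 * j) = qpoch q (q\<^sup>2) j * qpoch (q\<^sup>2) (q\<^sup>2) j"
    and even_minus_q: "qpoch (- q) q (2 * j) = qpoch (- q) (q\<^sup>2) j * qpoch (- (q\<^sup>2)) (q\<^sup>2) j"
    by (simp_all add: qpoch_even_odd power2_eq_square)
  show ?thesis
    unfolding qbinomial_coeff_def odd_ratio_def u_def[symmetric] even_q even_minus_q minus_q2
    using \<open>qpoch (- 1) (q\<^sup>2) j \<noteq> 0\<close> \<open>u \<noteq> 0\<close> \<open>qpoch (q\<^sup>2) (q\<^sup>2) j \<noteq> 0\<close> \<open>qpoch (- q) (q\<^sup>2) j \<noteq> 0\<close>
    by (simp add: field_simps power2_eq_square)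
qed

lemma norm_qbinomial_coeff_bounded:
  assumes "norm b < 1"
  obtains C where "0 \<le> C" "\<And>n. norm (qbinomial_coeff a b n) \<le> C"
  using Bseq_qbinomial_coeff[OF assms, of a] unfolding Bseq_def by (auto intro: less_imp_le)

text \<open>Writing \<open>(q;q\<^sup>2)\<^sub>m/(-q;q\<^sup>2)\<^sub>m\<close> as \<open>(-q\<^sup>2\<^sup>m\<^sup>+\<^sup>1;q\<^sup>2)\<^sub>\<infinity>/(q\<^sup>2\<^sup>m\<^sup>+\<^sup>1;q\<^sup>2)\<^sub>\<infinity>\<close> up to a constant
  and expanding by the \<open>q\<^sup>2\<close>-binomial theorem turns \<open>\<Sum>\<^sub>m q\<^sup>m (q;q\<^sup>2)\<^sub>m (-1;q)\<^sub>m/((-q;q\<^sup>2)\<^sub>m (q;q)\<^sub>m)\<close>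
  into the double series below; its columns are \<open>q\<close>-binomial series again.\<close>
definition odd_double_term :: "complex \<Rightarrow> nat \<Rightarrow> nat \<Rightarrow> complex" where
  "odd_double_term q m j =
    qbinomial_coeff (- 1) q m * q ^ m * (qbinomial_coeff (- 1) (q\<^sup>2) j * (q * (q\<^sup>2) ^ m) ^ j)"

lemma odd_double_term_row_sums:
  fixes q :: complex
  assumes q: "norm q < 1"
  shows "(\<lambda>j. odd_double_term q m j) sums
    (qpoch_inf (- q) (q\<^sup>2) / qpoch_inf q (q\<^sup>2) * (q ^ m * odd_ratio q m * qbinomial_coeff (- 1) q m))"
proof -
  have q2: "norm (q\<^sup>2) < 1"
    using q by (rule norm_power2_less_one)
  have "norm (q * (q\<^sup>2) ^ m) < 1"
    using norm_power_mult_less_one[OF q2 q] by (simp add: mult.commute)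
  from qbinomial_theorem[OF q2 this, of "- 1"]
  have "(\<lambda>j. qbinomial_coeff (- 1) (q\<^sup>2) j * (q * (q\<^sup>2) ^ m) ^ j)
      sums (qpoch_inf (- q) (q\<^sup>2) / qpoch_inf q (q\<^sup>2) * odd_ratio q m)"
    using qpoch_inf_ratio_shift[OF q q2, of m] by (simp add: odd_ratio_def)
  then have "(\<lambda>j. odd_double_term q m j) sums
      (qbinomial_coeff (- 1) q m * q ^ m * (qpoch_inf (- q) (q\<^sup>2) / qpoch_inf q (q\<^sup>2) * odd_ratio q m))"
    unfolding odd_double_term_def by (rule sums_mult)
  then show ?thesis
    by (simp add: mult_ac)
qed

lemma odd_double_term_column_sums:
  fixes q :: complex
  assumes q: "norm q < 1"
  shows "(\<lambda>m. odd_double_term q m j) sums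
    (2 * (qpoch_inf (- q) q / qpoch_inf q q) * (q ^ j * odd_ratio q j / (1 + q ^ (2 * j))))"
proof -
  have "norm (q * q ^ (2 * j)) < 1"
    using norm_power_mult_less_one[OF q q] by (simp add: mult.commute)
  from qbinomial_theorem[OF q this, of "- 1"]
  have "(\<lambda>m. qbinomial_coeff (- 1) q m * (q * q ^ (2 * j)) ^ m) sums
      (qpoch_inf (- q) q / qpoch_inf q q * (qpoch q q (2 * j) / qpoch (- q) q (2 * j)))"
    using qpoch_inf_ratio_shift[OF q q, of "2 * j"] by simp
  moreover have "odd_double_term q m j
      = qbinomial_coeff (- 1) (q\<^sup>2) j * q ^ j * (qbinomial_coeff (- 1) q m * (q * q ^ (2 * j)) ^ m)" for m
    unfolding odd_double_term_def by (simp add: power_mult_distrib power_mult[symmetric] mult_ac)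
  ultimately have "(\<lambda>m. odd_double_term q m j) sums (qbinomial_coeff (- 1) (q\<^sup>2) j * q ^ j
      * (qpoch_inf (- q) q / qpoch_inf q q * (qpoch q q (2 * j) / qpoch (- q) q (2 * j))))"
    by (simp only: sums_mult)
  also have "qbinomial_coeff (- 1) (q\<^sup>2) j * q ^ j
      * (qpoch_inf (- q) q / qpoch_inf q q * (qpoch q q (2 * j) / qpoch (- q) q (2 * j)))
    = qpoch_inf (- q) q / qpoch_inf q q * q ^ j
      * (qbinomial_coeff (- 1) (q\<^sup>2) j * (qpoch q q (2 * j) / qpoch (- q) q (2 * j)))"
    by (simp only: mult_ac)
  finally show ?thesis
    unfolding qbinomial_coeff_even_base[OF q] by (simp add: mult_ac)
qed

lemma norm_odd_double_term_le:
  fixes q :: complex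
  assumes q: "norm q < 1"
  obtains C1 C2 where "0 \<le> C1" "0 \<le> C2"
    "\<And>m j. norm (odd_double_term q m j) \<le> (C1 * norm q ^ m) * (C2 * norm q ^ j)"
proof -
  obtain C1 C2 where C: "0 \<le> C1" "\<And>n. norm (qbinomial_coeff (- 1) q n) \<le> C1"
    "0 \<le> C2" "\<And>n. norm (qbinomial_coeff (- 1) (q\<^sup>2) n) \<le> C2"
    using norm_qbinomial_coeff_bounded[OF q] norm_qbinomial_coeff_bounded[OF norm_power2_less_one[OF q]]
    by metis
  have "norm (odd_double_term q m j) \<le> (C1 * norm q ^ m) * (C2 * norm q ^ j)" for m j
  proof -
    have "norm (q * (q\<^sup>2) ^ m) \<le> norm q"
      using q unfolding norm_mult norm_power
      by (intro mult_right_le_one_le power_le_one) (simp_all add: power_le_one)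
    then have "norm (qbinomial_coeff (- 1) (q\<^sup>2) j) * norm (q * (q\<^sup>2) ^ m) ^ j \<le> C2 * norm q ^ j"
      using C by (intro mult_mono power_mono) simp_all
    moreover have "norm (qbinomial_coeff (- 1) q m) * norm q ^ m \<le> C1 * norm q ^ m"
      using C by (intro mult_right_mono) simp_all
    moreover have "norm (odd_double_term q m j) = norm (qbinomial_coeff (- 1) q m) * norm q ^ m
        * (norm (qbinomial_coeff (- 1) (q\<^sup>2) j) * norm (q * (q\<^sup>2) ^ m) ^ j)"
      by (simp add: odd_double_term_def norm_mult norm_power)
    ultimately show ?thesis
      using C by (simp add: mult_mono)
  qed
  with C that show thesis
    by blast
qed

theorem odd_ratio_qbinomial_coeff_sums:
  fixes q :: complex
  assumes q: "norm q < 1"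
  defines "T \<equiv> \<lambda>j. q ^ j * odd_ratio q j / (1 + q ^ (2 * j))"
  shows "summable T"
    and "(\<lambda>m. q ^ m * odd_ratio q m * qbinomial_coeff (- 1) q m)
      sums (2 * (qpoch_inf (- (q\<^sup>2)) (q\<^sup>2) / qpoch_inf (q\<^sup>2) (q\<^sup>2)) * suminf T)"
proof -
  define f where "f = odd_double_term q"
  define P where "P = qpoch_inf (- q) (q\<^sup>2) / qpoch_inf q (q\<^sup>2)"
  define K where "K = qpoch_inf (- q) q / qpoch_inf q q"
  have nonzero: "qpoch_inf q q \<noteq> 0" "qpoch_inf (- q) q \<noteq> 0" "qpoch_inf q (q\<^sup>2) \<noteq> 0"
    "qpoch_inf (- q) (q\<^sup>2) \<noteq> 0" "qpoch_inf (q\<^sup>2) (q\<^sup>2) \<noteq> 0" "qpoch_inf (- (q\<^sup>2)) (q\<^sup>2) \<noteq> 0"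
    using q norm_power2_less_one[OF q] by (simp_all add: qpoch_inf_nonzero)
  obtain C1 C2 where "0 \<le> C1" "0 \<le> C2" and bound: "\<And>m j. norm (f m j) \<le> (C1 * norm q ^ m) * (C2 * norm q ^ j)"
    using norm_odd_double_term_le[OF q] unfolding f_def by metis
  have "summable (\<lambda>n. C * norm q ^ n)" "0 \<le> C * norm q ^ n" if "0 \<le> C" for C n
    using q that by (simp_all add: summable_mult summable_geometric)
  note swap = suminf_swap_product_bounded[OF bound this[OF \<open>0 \<le> C1\<close>] this[OF \<open>0 \<le> C2\<close>]]
  have rows: "(\<Sum>j. f m j) = P * (q ^ m * odd_ratio q m * qbinomial_coeff (- 1) q m)" for m
    using odd_double_term_row_sums[OF q, of m] by (simp add: f_def P_def sums_iff)
  have cols: "(\<Sum>m. f m j) = 2 * K * T j" for j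
    using odd_double_term_column_sums[OF q, of j] by (simp add: f_def K_def T_def sums_iff)
  have "K \<noteq> 0" "P \<noteq> 0"
    using nonzero by (simp_all add: K_def P_def)
  then show "summable T"
    using swap(2) by (simp add: cols summable_cmult_iff)
  have "(\<lambda>m. (1 / P) * (\<Sum>j. f m j)) sums ((1 / P) * (2 * K * suminf T))"
    using summable_sums[OF swap(1)] \<open>summable T\<close> unfolding swap(3) cols suminf_mult
    by (intro sums_mult) (simp add: suminf_mult)
  moreover have "K / P = qpoch_inf (- (q\<^sup>2)) (q\<^sup>2) / qpoch_inf (q\<^sup>2) (q\<^sup>2)"
    using qpoch_inf_even_odd[OF q, of q] qpoch_inf_even_odd[OF q, of "- q"] nonzero
    by (simp add: K_def P_def power2_eq_square field_simps)
  ultimately show "(\<lambda>m. q ^ m * odd_ratio q m * qbinomial_coeff (- 1) q m)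
      sums (2 * (qpoch_inf (- (q\<^sup>2)) (q\<^sup>2) / qpoch_inf (q\<^sup>2) (q\<^sup>2)) * suminf T)"
    using \<open>P \<noteq> 0\<close> by (simp add: rows field_simps)
qed

section \<open>Gauss' identity for the theta series\<close>

definition gauss_binomial :: "complex \<Rightarrow> nat \<Rightarrow> nat \<Rightarrow> complex" where
  "gauss_binomial c N k = (if k \<le> N then qpoch c c N / (qpoch c c k * qpoch c c (N - k)) else 0)"

lemma gauss_binomial_0:
  assumes "norm c < 1"
  shows "gauss_binomial c N 0 = 1"
  using qpoch_nonzero[OF assms assms, of N] by (simp add: gauss_binomial_def)

lemma gauss_binomial_self:
  assumes "norm c < 1"
  shows "gauss_binomial c N N = 1"
  using qpoch_nonzero[OF assms assms, of N] by (simp add: gauss_binomial_def)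

lemma gauss_binomial_eq_0: "N < k \<Longrightarrow> gauss_binomial c N k = 0"
  by (simp add: gauss_binomial_def)

lemma gauss_binomial_symmetric: "k \<le> N \<Longrightarrow> gauss_binomial c N (N - k) = gauss_binomial c N k"
  by (simp add: gauss_binomial_def mult.commute)

lemma gauss_binomial_Suc_Suc:
  assumes c: "norm c < 1"
  shows "gauss_binomial c (Suc N) (Suc k) = gauss_binomial c N k + c ^ Suc k * gauss_binomial c N (Suc k)"
proof (cases "k < N")
  case True
  then obtain d where N: "N = Suc k + d"
    by (metis less_imp_Suc_add add_Suc)
  define P where "P = qpoch c c"
  have P_Suc: "P (Suc m) = P m * (1 - c ^ Suc m)" for m
    by (simp add: P_def qpoch_Suc)
  have "c \<noteq> 1"
    using c by auto
  then have "P m \<noteq> 0" "1 - c ^ Suc m \<noteq> 0" for m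
    using qpoch_nonzero[OF c c] one_minus_mult_power_nonzero[of c c m] c by (simp_all add: P_def)
  moreover have lhs: "gauss_binomial c (Suc N) (Suc k) = P N * (1 - c ^ Suc k * c ^ Suc d)
      / (P k * (1 - c ^ Suc k) * (P d * (1 - c ^ Suc d)))"
    using N by (simp add: gauss_binomial_def P_def[symmetric] P_Suc power_add[symmetric])
  moreover have rhs1: "gauss_binomial c N k = P N / (P k * (P d * (1 - c ^ Suc d)))"
    using N by (simp add: gauss_binomial_def P_def[symmetric] P_Suc)
  moreover have rhs2: "gauss_binomial c N (Suc k) = P N / (P k * (1 - c ^ Suc k) * P d)"
    using N by (simp add: gauss_binomial_def P_def[symmetric] P_Suc)
  ultimately show ?thesis
    unfolding lhs rhs1 rhs2 by (simp add: divide_simps) (simp add: algebra_simps)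
next
  case False
  then show ?thesis
    using gauss_binomial_self[OF c] by (cases "k = N") (simp_all add: gauss_binomial_eq_0)
qed

lemma Suc_choose_two: "Suc k choose 2 = (k choose 2) + k"
  by (simp add: numeral_2_eq_2)

theorem qpoch_eq_sum_gauss_binomial:
  assumes c: "norm c < 1"
  shows "qpoch x c N = (\<Sum>k\<le>N. gauss_binomial c N k * (- 1) ^ k * c ^ (k choose 2) * x ^ k)"
proof (induction N arbitrary: x)
  case 0
  then show ?case
    using gauss_binomial_0[OF c] by (simp add: binomial_eq_0)
next
  case (Suc N)
  define g where "g k = gauss_binomial c N k * (- 1) ^ k * c ^ (k choose 2) * (x * c) ^ k" for k
  have pascal: "gauss_binomial c (Suc N) (Suc k) * (- 1) ^ Suc k * c ^ (Suc k choose 2) * x ^ Suc k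
      = - x * g k + g (Suc k)" for k
    unfolding gauss_binomial_Suc_Suc[OF c] g_def Suc_choose_two
    by (simp add: power_mult_distrib power_add algebra_simps)
  have shift: "(\<Sum>k\<le>N. g (Suc k)) = (\<Sum>k\<le>N. g k) - 1"
    using sum.atMost_Suc_shift[of g N] gauss_binomial_eq_0[of N "Suc N" c] gauss_binomial_0[OF c]
    by (simp add: g_def binomial_eq_0)
  have "(\<Sum>k\<le>Suc N. gauss_binomial c (Suc N) k * (- 1) ^ k * c ^ (k choose 2) * x ^ k)
      = 1 + (\<Sum>k\<le>N. - x * g k + g (Suc k))"
    by (subst sum.atMost_Suc_shift, simp only: pascal) (simp add: gauss_binomial_0[OF c] binomial_eq_0)
  also have "\<dots> = (1 - x) * (\<Sum>k\<le>N. g k)"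
    by (simp add: sum_subtractf sum_distrib_left[symmetric] shift algebra_simps)
  also have "(\<Sum>k\<le>N. g k) = qpoch (x * c) c N"
    using Suc.IH[of "x * c"] by (simp add: g_def)
  also have "(1 - x) * qpoch (x * c) c N = qpoch x c (Suc N)"
    using qpoch_add[of x c 1 N] by (simp add: qpoch_def)
  finally show ?case ..
qed

lemma sum_atMost_double_split:
  fixes g :: "nat \<Rightarrow> 'a::comm_monoid_add"
  shows "(\<Sum>k\<le>2 * n. g k) = g n + (\<Sum>j=1..n. g (n + j) + g (n - j))"
proof (induction n arbitrary: g)
  case (Suc n)
  have "(\<Sum>k\<le>2 * Suc n. g k) = g 0 + (\<Sum>k\<le>Suc (2 * n). g (Suc k))"
    by (simp add: sum.atMost_Suc_shift del: sum.atMost_Suc)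
  also have "\<dots> = g 0 + g (Suc (Suc (2 * n))) + (\<Sum>k\<le>2 * n. g (Suc k))"
    by (simp add: add_ac)
  also have "(\<Sum>k\<le>2 * n. g (Suc k)) = g (Suc n) + (\<Sum>j=1..n. g (Suc n + j) + g (Suc n - j))"
    using Suc.IH[of "\<lambda>k. g (Suc k)"] by (simp add: Suc_diff_le)
  finally show ?case
    by (simp add: sum.cl_ivl_Suc algebra_simps mult_2_right)
qed simp

lemma prod_power_odd: "(\<Prod>i<n. (p::complex) ^ (2 * i + 1)) = p ^ n\<^sup>2"
proof (induction n)
  case (Suc n)
  have "(Suc n)\<^sup>2 = n\<^sup>2 + (2 * n + 1)"
    by (simp add: power2_eq_square)
  then show ?case
    using Suc by (simp add: power_add)
qed simp

text \<open>Reversing the order of the factors of \<open>(p\<^sup>1\<^sup>-\<^sup>2\<^sup>n;p\<^sup>2)\<^sub>n\<close>.\<close>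
lemma qpoch_reflect:
  fixes p :: complex
  assumes p: "p \<noteq> 0"
  shows "p ^ n\<^sup>2 * qpoch (p / p ^ (2 * n)) (p\<^sup>2) n = (- 1) ^ n * qpoch p (p\<^sup>2) n"
proof -
  have factor: "1 - p / p ^ (2 * n) * (p\<^sup>2) ^ (n - Suc i) = (- 1) * (1 - p * (p\<^sup>2) ^ i) / p ^ (2 * i + 1)"
    if "i < n" for i
  proof -
    define a where "a = n - Suc i"
    have "2 * n = 1 + 2 * a + (2 * i + 1)"
      using that by (simp add: a_def)
    then have "p ^ (2 * n) = p * (p\<^sup>2) ^ a * p ^ (2 * i + 1)"
      by (simp add: power_add power_mult)
    moreover have "p * (p\<^sup>2) ^ i = p ^ (2 * i + 1)"
      by (simp add: power_add power_mult)
    ultimately show ?thesis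
      using p by (simp add: a_def[symmetric] field_simps)
  qed
  have "qpoch (p / p ^ (2 * n)) (p\<^sup>2) n = (\<Prod>i<n. 1 - p / p ^ (2 * n) * (p\<^sup>2) ^ (n - Suc i))"
    unfolding qpoch_def by (rule prod.nat_diff_reindex[symmetric])
  also have "\<dots> = (\<Prod>i<n. (- 1) * (1 - p * (p\<^sup>2) ^ i) / p ^ (2 * i + 1))"
    by (intro prod.cong refl factor) simp
  also have "\<dots> = (- 1) ^ n * qpoch p (p\<^sup>2) n / p ^ n\<^sup>2"
    unfolding prod_dividef prod.distrib prod_power_odd[symmetric] qpoch_def by simp
  finally show ?thesis
    using p by (simp add: field_simps)
qed

lemma power_gauss_exponent:
  fixes p :: complex
  assumes p: "p \<noteq> 0"
  shows "p ^ n\<^sup>2 * ((p\<^sup>2) ^ (k choose 2) * (p / p ^ (2 * n)) ^ k) = p ^ (if n \<le> k then k - n else n - k)\<^sup>2"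
proof -
  define e where "e = (if n \<le> k then k - n else n - k)\<^sup>2"
  have "n\<^sup>2 + k * k = e + 2 * n * k"
  proof (cases "n \<le> k")
    case True
    then obtain d where "k = n + d"
      using le_Suc_ex by blast
    then show ?thesis
      by (simp add: e_def power2_eq_square algebra_simps)
  next
    case False
    then obtain d where "n = k + d"
      using le_Suc_ex nat_le_linear by blast
    then show ?thesis
      using False by (simp add: e_def power2_eq_square algebra_simps)
  qed
  moreover have "2 * (k choose 2) + k = k * k"
    by (induction k) (simp_all add: Suc_choose_two binomial_eq_0 algebra_simps)
  moreover have "(p\<^sup>2) ^ (k choose 2) * (p / p ^ (2 * n)) ^ k * p ^ (2 * n * k) = p ^ (2 * (k choose 2) + k)"
    using p by (simp add: power_divide power_add power_mult[symmetric] mult.commute)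
  ultimately have "p ^ n\<^sup>2 * ((p\<^sup>2) ^ (k choose 2) * (p / p ^ (2 * n)) ^ k) * p ^ (2 * n * k) = p ^ e * p ^ (2 * n * k)"
    by (simp add: mult.assoc power_add[symmetric])
  then show ?thesis
    using p by (simp add: e_def)
qed

lemma qpoch_square_eq_sum_gauss_binomial:
  fixes p :: complex
  assumes p1: "norm p < 1" and p: "p \<noteq> 0"
  shows "(- 1) ^ n * qpoch p (p\<^sup>2) n ^ 2
    = (\<Sum>k\<le>2 * n. gauss_binomial (p\<^sup>2) (2 * n) k * (- 1) ^ k * p ^ (if n \<le> k then k - n else n - k)\<^sup>2)"
proof -
  define c where "c = p\<^sup>2"
  have c: "norm c < 1"
    unfolding c_def using p1 by (rule norm_power2_less_one)
  define x where "x = p / p ^ (2 * n)"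
  have "x * c ^ n = p"
    using p by (simp add: x_def c_def power_mult[symmetric])
  then have "(- 1) ^ n * qpoch p c n ^ 2 = p ^ n\<^sup>2 * qpoch x c (2 * n)"
    using qpoch_add[of x c n n] qpoch_reflect[OF p, of n]
    by (simp add: x_def c_def mult_2 power2_eq_square)
  moreover have "p ^ n\<^sup>2 * (gauss_binomial c (2 * n) k * (- 1) ^ k * c ^ (k choose 2) * x ^ k)
      = gauss_binomial c (2 * n) k * (- 1) ^ k * (p ^ n\<^sup>2 * (c ^ (k choose 2) * x ^ k))" for k
    by (simp only: mult_ac)
  ultimately show ?thesis
    unfolding qpoch_eq_sum_gauss_binomial[OF c, of x] sum_distrib_left
    by (simp only: c_def x_def power_gauss_exponent[OF p])
qed

lemma qpoch_square_finite_gauss: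
  fixes p :: complex
  assumes p1: "norm p < 1" and p: "p \<noteq> 0"
  shows "qpoch p (p\<^sup>2) n ^ 2 = gauss_binomial (p\<^sup>2) (2 * n) n
    + 2 * (\<Sum>j=1..n. (- 1) ^ j * p ^ j\<^sup>2 * gauss_binomial (p\<^sup>2) (2 * n) (n + j))"
proof -
  define g where
    "g k = gauss_binomial (p\<^sup>2) (2 * n) k * (- 1) ^ k * p ^ (if n \<le> k then k - n else n - k)\<^sup>2" for k
  have "g (n + j) + g (n - j) = (- 1) ^ n * (2 * ((- 1) ^ j * p ^ j\<^sup>2 * gauss_binomial (p\<^sup>2) (2 * n) (n + j)))"
    if j: "j \<in> {1..n}" for j
  proof -
    have "gauss_binomial (p\<^sup>2) (2 * n) (n - j) = gauss_binomial (p\<^sup>2) (2 * n) (n + j)"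
      using gauss_binomial_symmetric[of "n + j" "2 * n" "p\<^sup>2"] j by (simp add: mult_2)
    moreover have "(- 1 :: complex) ^ (n - j) = (- 1) ^ n * (- 1) ^ j"
      using j by (simp add: power_diff minus_one_power_iff)
    moreover have "(if n \<le> n + j then n + j - n else n - (n + j))\<^sup>2 = j\<^sup>2"
      and "(if n \<le> n - j then n - j - n else n - (n - j))\<^sup>2 = j\<^sup>2"
      using j by auto
    ultimately show ?thesis
      by (simp only: g_def) (simp add: power_add algebra_simps)
  qed
  then have "(- 1) ^ n * qpoch p (p\<^sup>2) n ^ 2 = (- 1) ^ n * (gauss_binomial (p\<^sup>2) (2 * n) n
      + 2 * (\<Sum>j=1..n. (- 1) ^ j * p ^ j\<^sup>2 * gauss_binomial (p\<^sup>2) (2 * n) (n + j)))"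
    unfolding qpoch_square_eq_sum_gauss_binomial[OF p1 p] g_def[symmetric] sum_atMost_double_split
    by (simp add: g_def sum_distrib_left algebra_simps)
  then show ?thesis
    by simp
qed

lemma norm_gauss_binomial_bounded:
  assumes c: "norm c < 1"
  obtains M where "\<And>N k. norm (gauss_binomial c N k) \<le> M"
proof -
  obtain U where U: "0 < U" "\<And>n. norm (qpoch c c n) \<le> U"
    using Bseq_qpoch[OF c, of c] unfolding Bseq_def by auto
  obtain V where V: "0 < V" "\<And>n. norm (inverse (qpoch c c n)) \<le> V"
    using Bseq_inverse_qpoch[OF c c] unfolding Bseq_def by auto
  have "norm (gauss_binomial c N k) \<le> U * V * V" for N k
  proof (cases "k \<le> N")
    case True
    then have "norm (gauss_binomial c N k)
        = norm (qpoch c c N) * norm (inverse (qpoch c c k)) * norm (inverse (qpoch c c (N - k)))"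
      by (simp add: gauss_binomial_def norm_mult norm_divide norm_inverse divide_inverse)
    also have "\<dots> \<le> U * V * V"
      using U V by (intro mult_mono) simp_all
    finally show ?thesis .
  next
    case False
    with U V show ?thesis
      by (simp add: gauss_binomial_def)
  qed
  then show thesis
    using that by blast
qed

lemma gauss_binomial_central_tendsto:
  assumes c: "norm c < 1"
  shows "(\<lambda>n. gauss_binomial c (2 * n) (n + j)) \<longlonglongrightarrow> 1 / qpoch_inf c c"
proof -
  define P where "P = qpoch c c"
  define L where "L = qpoch_inf c c"
  have "L \<noteq> 0"
    unfolding L_def using c c by (rule qpoch_inf_nonzero)
  have P: "P \<longlonglongrightarrow> L"
    unfolding P_def L_def using c by (rule qpoch_tendsto_qpoch_inf)
  have "(\<lambda>n. P (2 * n)) \<longlonglongrightarrow> L"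
    by (rule LIMSEQ_subseq_LIMSEQ[OF P, unfolded o_def]) (simp add: strict_mono_def)
  moreover have "(\<lambda>n. P (n + j)) \<longlonglongrightarrow> L"
    by (rule LIMSEQ_ignore_initial_segment[OF P])
  moreover have "(\<lambda>n. P (n - j)) \<longlonglongrightarrow> L"
    by (rule LIMSEQ_offset[where k = j]) (simp add: P)
  ultimately have "(\<lambda>n. P (2 * n) / (P (n + j) * P (n - j))) \<longlonglongrightarrow> L / (L * L)"
    using \<open>L \<noteq> 0\<close> by (intro tendsto_divide tendsto_mult) simp_all
  moreover have "\<forall>\<^sub>F n in sequentially. P (2 * n) / (P (n + j) * P (n - j)) = gauss_binomial c (2 * n) (n + j)"
  proof (rule eventually_sequentiallyI[of j])
    fix n
    assume "j \<le> n"
    then have "n + j \<le> 2 * n" "2 * n - (n + j) = n - j"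
      by auto
    then show "P (2 * n) / (P (n + j) * P (n - j)) = gauss_binomial c (2 * n) (n + j)"
      by (simp add: gauss_binomial_def P_def)
  qed
  ultimately have "(\<lambda>n. gauss_binomial c (2 * n) (n + j)) \<longlonglongrightarrow> L / (L * L)"
    by (rule Lim_transform_eventually)
  then show ?thesis
    using \<open>L \<noteq> 0\<close> by (simp add: L_def)
qed

lemma gauss_binomial_weighted_sum_tendsto:
  fixes p :: complex
  assumes p: "norm p < 1"
  shows "(\<lambda>n. \<Sum>j=1..n. (- 1) ^ j * p ^ j\<^sup>2 * gauss_binomial (p\<^sup>2) (2 * n) (n + j))
    \<longlonglongrightarrow> (\<Sum>k. (- 1) ^ (k + 1) * p ^ (k + 1)\<^sup>2) * (1 / qpoch_inf (p\<^sup>2) (p\<^sup>2))"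
proof -
  have c: "norm (p\<^sup>2) < 1"
    using p by (rule norm_power2_less_one)
  obtain M where "\<And>N k. norm (gauss_binomial (p\<^sup>2) N k) \<le> M"
    using norm_gauss_binomial_bounded[OF c] by blast
  moreover have "summable (\<lambda>k. norm ((- 1 :: complex) ^ (k + 1) * p ^ (k + 1)\<^sup>2))"
  proof (rule summable_comparison_test'[OF summable_geometric[of "norm p"]])
    show "norm (norm ((- 1 :: complex) ^ (k + 1) * p ^ (k + 1)\<^sup>2)) \<le> norm p ^ k" for k
    proof -
      have "k \<le> (k + 1)\<^sup>2"
        by (simp add: power2_eq_square)
      then show ?thesis
        using p by (simp add: norm_mult norm_power power_decreasing)
    qed
  qed (use p in simp)
  ultimately have "(\<lambda>n. \<Sum>k<n. (- 1) ^ (k + 1) * p ^ (k + 1)\<^sup>2 * gauss_binomial (p\<^sup>2) (2 * n) (n + (k + 1)))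
      \<longlonglongrightarrow> (\<Sum>k. (- 1) ^ (k + 1) * p ^ (k + 1)\<^sup>2) * (1 / qpoch_inf (p\<^sup>2) (p\<^sup>2))"
    by (intro tendsto_sum_lessThan_mult_bounded gauss_binomial_central_tendsto c)
  then show ?thesis
    by (simp only: sum.atLeast1_atMost_eq[folded One_nat_def] add.assoc[symmetric] Suc_eq_plus1)
qed

theorem gauss_theta_identity:
  fixes p :: complex
  assumes p: "norm p < 1"
  shows "qpoch_inf p p / qpoch_inf (- p) p = 1 + 2 * (\<Sum>k. (- 1) ^ (k + 1) * p ^ (k + 1)\<^sup>2)"
proof (cases "p = 0")
  case True
  then show ?thesis
    by (simp add: qpoch_inf_def power_0_left)
next
  case False
  define L where "L = qpoch_inf (p\<^sup>2) (p\<^sup>2)"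
  define S where "S = (\<Sum>k. (- 1) ^ (k + 1) * p ^ (k + 1)\<^sup>2)"
  have "L \<noteq> 0"
    unfolding L_def using p by (simp add: qpoch_inf_nonzero norm_power2_less_one)
  have "(\<lambda>n. qpoch p (p\<^sup>2) n ^ 2) \<longlonglongrightarrow> qpoch_inf p (p\<^sup>2) ^ 2"
    using p by (intro tendsto_power qpoch_tendsto_qpoch_inf norm_power2_less_one)
  moreover have "(\<lambda>n. qpoch p (p\<^sup>2) n ^ 2) \<longlonglongrightarrow> 1 / L + 2 * (S * (1 / L))"
    unfolding qpoch_square_finite_gauss[OF p False] L_def S_def
    by (intro tendsto_add tendsto_mult_left gauss_binomial_weighted_sum_tendsto p)
       (use gauss_binomial_central_tendsto[OF norm_power2_less_one[OF p], of 0] in simp)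
  ultimately have "L * qpoch_inf p (p\<^sup>2) ^ 2 = 1 + 2 * S"
    using \<open>L \<noteq> 0\<close> LIMSEQ_unique by (fastforce simp: field_simps)
  moreover have "qpoch_inf p p = qpoch_inf p (p\<^sup>2) * L"
    using qpoch_inf_even_odd[OF p, of p] by (simp add: L_def power2_eq_square)
  moreover have "qpoch_inf (- p) p = L / qpoch_inf p p"
    using qpoch_inf_plus_minus[OF p, of p] qpoch_inf_nonzero[OF p p] by (simp add: L_def field_simps)
  ultimately show ?thesis
    using \<open>L \<noteq> 0\<close> by (simp add: S_def power2_eq_square mult_ac)
qed

section \<open>The summands of the theorem\<close>

lemma qpoch_upper_half_qpoch_inf:
  fixes a q :: complex
  assumes q: "norm q < 1"
  shows "qpoch (a * q) q m * (qpoch (a * q ^ Suc m) q m * qpoch_inf (a * q ^ (2 * m + 2)) (q\<^sup>2))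
    = qpoch (a * q) (q\<^sup>2) m * qpoch_inf (a * q\<^sup>2) (q\<^sup>2)"
proof -
  have "qpoch (a * q) q m * qpoch (a * q ^ Suc m) q m = qpoch (a * q) q (2 * m)"
    using qpoch_add[of "a * q" q m m] by (simp add: mult_2 mult.assoc)
  also have "\<dots> = qpoch (a * q) (q\<^sup>2) m * qpoch (a * q\<^sup>2) (q\<^sup>2) m"
    by (simp add: qpoch_even_odd power2_eq_square mult.assoc)
  moreover have "qpoch_inf (a * q\<^sup>2) (q\<^sup>2) = qpoch (a * q\<^sup>2) (q\<^sup>2) m * qpoch_inf (a * q ^ (2 * m + 2)) (q\<^sup>2)"
  proof -
    have shift: "a * q\<^sup>2 * (q\<^sup>2) ^ m = a * q ^ (2 * m + 2)"
      unfolding power_add power_mult by (simp only: mult_ac)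
    show ?thesis
      using qpoch_inf_split[OF norm_power2_less_one[OF q], of "a * q\<^sup>2" m] unfolding shift .
  qed
  ultimately show ?thesis
    by (simp add: mult_ac)
qed

lemma summand_eq_odd_ratio_qbinomial_coeff:
  fixes q :: complex
  assumes q: "norm q < 1"
  shows "(q ^ m * qpoch (q ^ Suc m) q m * qpoch_inf (q ^ (2 * m + 2)) (q\<^sup>2))
      / ((1 + q ^ m) * qpoch (- (q ^ Suc m)) q m * qpoch_inf (- (q ^ (2 * m + 2))) (q\<^sup>2))
    = qpoch_inf (q\<^sup>2) (q\<^sup>2) / qpoch_inf (- (q\<^sup>2)) (q\<^sup>2) / 2
      * (q ^ m * odd_ratio q m * qbinomial_coeff (- 1) q m)"
proof -
  have q2: "norm (q\<^sup>2) < 1"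
    using q by (rule norm_power2_less_one)
  have plus: "qpoch q q m * (qpoch (q ^ Suc m) q m * qpoch_inf (q ^ (2 * m + 2)) (q\<^sup>2))
      = qpoch q (q\<^sup>2) m * qpoch_inf (q\<^sup>2) (q\<^sup>2)"
    using qpoch_upper_half_qpoch_inf[OF q, of 1 m] by simp
  have minus: "qpoch (- q) q m * (qpoch (- (q ^ Suc m)) q m * qpoch_inf (- (q ^ (2 * m + 2))) (q\<^sup>2))
      = qpoch (- q) (q\<^sup>2) m * qpoch_inf (- (q\<^sup>2)) (q\<^sup>2)"
    using qpoch_upper_half_qpoch_inf[OF q, of "- 1" m] by simp
  have nonzero: "qpoch q q m \<noteq> 0" "qpoch (- q) q m \<noteq> 0" "qpoch (- q) (q\<^sup>2) m \<noteq> 0"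
    "qpoch_inf (- (q\<^sup>2)) (q\<^sup>2) \<noteq> 0"
    using q q2 by (simp_all add: qpoch_nonzero qpoch_inf_nonzero)
  then have "qpoch (- 1) q m \<noteq> 0"
    using qpoch_minus_one[of q m] by auto
  then have one_plus: "1 + q ^ m = 2 * qpoch (- q) q m / qpoch (- 1) q m"
    using qpoch_minus_one[of q m] by (simp add: field_simps)
  have upper: "qpoch (q ^ Suc m) q m * qpoch_inf (q ^ (2 * m + 2)) (q\<^sup>2)
      = qpoch q (q\<^sup>2) m * qpoch_inf (q\<^sup>2) (q\<^sup>2) / qpoch q q m"
    using plus nonzero by (simp add: field_simps)
  have upper_minus: "qpoch (- (q ^ Suc m)) q m * qpoch_inf (- (q ^ (2 * m + 2))) (q\<^sup>2)
      = qpoch (- q) (q\<^sup>2) m * qpoch_inf (- (q\<^sup>2)) (q\<^sup>2) / qpoch (- q) q m"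
    using minus nonzero by (simp add: field_simps)
  show ?thesis
    unfolding mult.assoc upper upper_minus one_plus
    using nonzero \<open>qpoch (- 1) q m \<noteq> 0\<close>
    by (simp add: odd_ratio_def qbinomial_coeff_def field_simps)
qed

lemma odd_ratio_qbinomial_coeff_tail_sums:
  fixes q :: complex
  assumes q: "norm q < 1"
  defines "R \<equiv> qpoch_inf (q\<^sup>2) (q\<^sup>2) / qpoch_inf (- (q\<^sup>2)) (q\<^sup>2)"
  shows "(\<lambda>n. R / 2 * (q ^ (n + 1) * odd_ratio q (n + 1) * qbinomial_coeff (- 1) q (n + 1)))
    sums ((\<Sum>k. q ^ (k + 1) * odd_ratio q (k + 1) / (1 + q ^ (2 * (k + 1)))) + 1 / 2 - R / 2)"
proof -
  define T where "T = (\<lambda>j. q ^ j * odd_ratio q j / (1 + q ^ (2 * j)))"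
  define g where "g = (\<lambda>m. q ^ m * odd_ratio q m * qbinomial_coeff (- 1) q m)"
  have "R \<noteq> 0"
    using q by (simp add: R_def qpoch_inf_nonzero norm_power2_less_one)
  have "summable T" and "g sums (2 * (1 / R) * suminf T)"
    using odd_ratio_qbinomial_coeff_sums[OF q] by (simp_all add: T_def g_def R_def)
  moreover have "g 0 = 1" "T 0 = 1 / 2"
    by (simp_all add: g_def T_def)
  ultimately have g_tail: "(\<lambda>n. g (Suc n)) sums (2 * (1 / R) * suminf T - 1)"
    and T_tail: "(\<lambda>k. T (Suc k)) sums (suminf T - 1 / 2)"
    unfolding sums_Suc_iff using summable_sums[OF \<open>summable T\<close>] by (simp_all only: diff_add_cancel)
  have "(\<lambda>n. R / 2 * g (Suc n)) sums (R / 2 * (2 * (1 / R) * suminf T - 1))"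
    using g_tail by (rule sums_mult)
  also have "R / 2 * (2 * (1 / R) * suminf T - 1) = (suminf T - 1 / 2) + 1 / 2 - R / 2"
    using \<open>R \<noteq> 0\<close> by (simp add: field_simps)
  also have "suminf T - 1 / 2 = (\<Sum>k. T (Suc k))"
    using T_tail by (simp add: sums_iff)
  finally show ?thesis
    by (simp add: g_def T_def)
qed

theorem lemma4p1:
  fixes q :: complex
  assumes "norm q < 1"
  shows "(\<Sum>n. (q ^ (n+1) * qpoch (q ^ (n+2)) q (n+1) * qpoch_inf (q ^ (2*n+4)) (q^2))
              / ((1 + q ^ (n+1)) * qpoch (- (q ^ (n+2))) q (n+1) * qpoch_inf (- (q ^ (2*n+4))) (q^2)))
       = - (\<Sum>n. (-1) ^ (n+1) * q ^ (2 * (n+1)^2))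
         + (\<Sum>k. q ^ (k+1) * qpoch q (q^2) (k+1) / (qpoch (-q) (q^2) (k+1) * (1 + q ^ (2*(k+1)))))"
proof -
  define R where "R = qpoch_inf (q\<^sup>2) (q\<^sup>2) / qpoch_inf (- (q\<^sup>2)) (q\<^sup>2)"
  have theta: "R = 1 + 2 * (\<Sum>n. (- 1) ^ (n + 1) * q ^ (2 * (n + 1)\<^sup>2))"
    using gauss_theta_identity[OF norm_power2_less_one[OF assms]] by (simp add: R_def power_mult)
  have index: "Suc (n + 1) = n + 2" "2 * (n + 1) + 2 = 2 * n + 4" for n :: nat
    by simp_all
  note summand = summand_eq_odd_ratio_qbinomial_coeff[OF assms, of "n + 1" for n, unfolded index, folded R_def]
  have odd_term: "q ^ (k + 1) * qpoch q (q\<^sup>2) (k + 1) / (qpoch (- q) (q\<^sup>2) (k + 1) * (1 + q ^ (2 * (k + 1))))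
      = q ^ (k + 1) * odd_ratio q (k + 1) / (1 + q ^ (2 * (k + 1)))" for k
    by (simp add: odd_ratio_def)
  show ?thesis
    unfolding summand odd_term sums_unique[OF odd_ratio_qbinomial_coeff_tail_sums[OF assms, folded R_def], symmetric]
    by (simp add: theta field_simps)
qed

end
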